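(* Consider the $\lambda$-SAGA algorithm (defined in the context) with fixed $\lambda\in[0,1]$ and positive deterministic step sequence $(\gamma_n)$ that is non-increasing. Assume there is a point $x^*$ with $\nabla f(x^* )=0$ and a constant $L>0$ such that for all $x$, $\tau^2(x)\le L\|x-x^*\|^2$. Define $V_n=\|X_n-x^*\|^2$ and, for $n\ge2$, $T_n=V_n+3N\gamma_{n-1}^2A_n$. Then for all $n\ge2$, almost surely, $$\mathbb E[A_{n+1}\mid\mathcal F_n]=\tfrac1N\tau^2(X_n)+\big(1-\tfrac1N\big)A_n,$$ and $$\mathbb E[T_{n+1}\mid\mathcal F_n]\le(1+6L\gamma_n^2)T_n-2\gamma_n\langle X_n-x^*,\nabla f(X_n)\rangle+3\gamma_n^2\theta^*.$$
   Context: Let $N,d\ge1$ be integers, $f_1,\dots,f_N:\mathbb R^d\to\mathbb R$ differentiable, and $f=\frac1N\sum_{k=1}^N f_k$. The $\lambda$-SAGA algorithm with parameter $\lambda\in[0,1]$ and positive deterministic steps $(\gamma_n)_{n\ge1}$: let $X_0,X_1$ be square-integrable random vectors in $\mathbb R^d$ and $(U_n)_{n\ge2}$ i.i.d. uniform on $\{1,\dots,N\}$, independent of $(X_0,X_1)$. Set $g_{1,k}=\nabla f_k(X_0)$ for $k=1,\dots,N$ and for $n\ge1$: $X_{n+1}=X_n-\gamma_n\Big(\nabla f_{U_{n+1}}(X_n)-\lambda\big(g_{n,U_{n+1}}-\frac1N\sum_{k=1}^N g_{n,k}\big)\Big)$, and $g_{n+1,k}=\nabla f_k(X_n)$ if $U_{n+1}=k$,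 $g_{n+1,k}=g_{n,k}$ otherwise. Let $\mathcal F_n=\sigma(X_0,X_1,U_2,\dots,U_n)$. Define $\phi_{n,k}$ by $\phi_{1,k}=X_0$, $\phi_{n+1,k}=X_n$ if $U_{n+1}=k$ and $\phi_{n+1,k}=\phi_{n,k}$ otherwise (so $g_{n,k}=\nabla f_k(\phi_{n,k})$). Notation: $\tau^2(x)=\frac1N\sum_{k=1}^N\|\nabla f_k(x)-\nabla f_k(x^* )\|^2$, $A_n=\frac1N\sum_{k=1}^N\|\nabla f_k(\phi_{n,k})-\nabla f_k(x^* )\|^2$, $\theta^*=\frac1N\sum_{k=1}^N\|\nabla f_k(x^* )\|^2$. *)

theory Defs
  imports "HOL-Probability.Probability"
begin

definition grad :: "('a::euclidean_space \<Rightarrow> real) \<Rightarrow> 'a \<Rightarrow> 'a" where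
  "grad h x = (SOME D. GDERIV h x :> D)"

(* state of lambda-SAGA at step n: (X_n, \<phi>_n) with \<phi>_n k the point at which g_{n,k} was evaluated;
   f k for k = 1..N are the component functions *)
fun saga_state :: "nat \<Rightarrow> (nat \<Rightarrow> 'a::euclidean_space \<Rightarrow> real) \<Rightarrow> real \<Rightarrow> (nat \<Rightarrow> real)
   \<Rightarrow> ('w \<Rightarrow> 'a) \<Rightarrow> ('w \<Rightarrow> 'a) \<Rightarrow> (nat \<Rightarrow> 'w \<Rightarrow> nat) \<Rightarrow> nat \<Rightarrow> 'w \<Rightarrow> 'a \<times> (nat \<Rightarrow> 'a)" where
  "saga_state N f lam gamma X0 X1 U 0 w = (X0 w, (\<lambda>k. X0 w))"
| "saga_state N f lam gamma X0 X1 U (Suc 0) w = (X1 w, (\<lambda>k. X0 w))"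
| "saga_state N f lam gamma X0 X1 U (Suc (Suc m)) w =
     (let n = Suc m; (x, \<phi>) = saga_state N f lam gamma X0 X1 U n w; u = U (Suc n) w;
          x' = x - gamma n *\<^sub>R (grad (f u) x
                 - lam *\<^sub>R (grad (f u) (\<phi> u) - (1 / real N) *\<^sub>R (\<Sum>k=1..N. grad (f k) (\<phi> k))))
      in (x', \<phi>(u := x)))"

definition saga_X where
  "saga_X N f lam gamma X0 X1 U n w = fst (saga_state N f lam gamma X0 X1 U n w)"

definition saga_phi where
  "saga_phi N f lam gamma X0 X1 U n w = snd (saga_state N f lam gamma X0 X1 U n w)"

definition saga_filtration :: "'w measure \<Rightarrow> ('w \<Rightarrow> 'a::euclidean_space) \<Rightarrow> ('w \<Rightarrow> 'a)
    \<Rightarrow> (nat \<Rightarrow> 'w \<Rightarrow> nat) \<Rightarrow> nat \<Rightarrow> 'w measure" where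
  "saga_filtration M X0 X1 U n = sigma (space M)
     ({X0 -` B \<inter> space M | B. B \<in> sets borel} \<union> {X1 -` B \<inter> space M | B. B \<in> sets borel}
      \<union> {U k -` {j} \<inter> space M | k j. 2 \<le> k \<and> k \<le> n})"

definition tau2 :: "nat \<Rightarrow> (nat \<Rightarrow> 'a::euclidean_space \<Rightarrow> real) \<Rightarrow> 'a \<Rightarrow> 'a \<Rightarrow> real" where
  "tau2 N f xs x = (1 / real N) * (\<Sum>k=1..N. (norm (grad (f k) x - grad (f k) xs))\<^sup>2)"

definition saga_A where
  "saga_A N f lam gamma X0 X1 U xs n w =
     (1 / real N) * (\<Sum>k=1..N. (norm (grad (f k) (saga_phi N f lam gamma X0 X1 U n w k) - grad (f k) xs))\<^sup>2)"

definition theta_star :: "nat \<Rightarrow> (nat \<Rightarrow> 'a::euclidean_space \<Rightarrow> real) \<Rightarrow> 'a \<Rightarrow> real" where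
  "theta_star N f xs = (1 / real N) * (\<Sum>k=1..N. (norm (grad (f k) xs))\<^sup>2)"

definition grad_avg :: "nat \<Rightarrow> (nat \<Rightarrow> 'a::euclidean_space \<Rightarrow> real) \<Rightarrow> 'a \<Rightarrow> 'a" where
  "grad_avg N f x = grad (\<lambda>y. (1 / real N) * (\<Sum>k=1..N. f k y)) x"

definition saga_T where
  "saga_T N f lam gamma X0 X1 U xs n w =
     (norm (saga_X N f lam gamma X0 X1 U n w - xs))\<^sup>2
     + 3 * real N * (gamma (n - 1))\<^sup>2 * saga_A N f lam gamma X0 X1 U xs n w"

end

theory Submission
  imports Defs
begin

(* A step of lambda-SAGA overwrites the stored point of the drawn index j = U_{n+1} by X_n. As
   U_{n+1} is uniform on {1..N} and independent of F_n, conditioning on F_n just averages over j;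
   for A_{n+1} this average is exactly tau^2(X_n)/N + (1 - 1/N) A_n. For X_{n+1} = X_n - gamma_n G_j
   the average of the squared distance to the minimiser xs is V_n minus the cross term with
   grad f(X_n) plus gamma_n^2 times the mean of |G_j|^2. Splitting G_j around the gradients
   grad f_j(xs), whose mean vanishes, into three pieces and bounding the centred piece by its
   uncentred second moment gives mean |G_j|^2 <= 3 (tau^2(X_n) + theta* + A_n). Adding 3 N gamma_n^2
   times the identity for A and using tau^2(X_n) <= L V_n and gamma_n <= gamma_{n-1} yields the
   bound on T. *)

section \<open>Gradients\<close>

lemma gderiv_grad:
  fixes h :: "'a::euclidean_space \<Rightarrow> real"
  assumes "h differentiable (at x)"
  shows "GDERIV h x :> grad h x"
proof -
  obtain D where D: "(h has_derivative D) (at x)"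
    using assms differentiable_def by blast
  have lin: "linear D"
    using D has_derivative_linear by blast
  have "D = (\<lambda>v. inner v (\<Sum>b\<in>Basis. D b *\<^sub>R b))"
  proof
    fix v
    have "D v = (\<Sum>i\<in>Basis. (v \<bullet> i) * (D i \<bullet> 1))"
      using Linear_Algebra.linear_componentwise[OF lin, of v 1] by simp
    then show "D v = inner v (\<Sum>b\<in>Basis. D b *\<^sub>R b)"
      by (simp add: inner_sum_right mult.commute)
  qed
  then have "GDERIV h x :> (\<Sum>b\<in>Basis. D b *\<^sub>R b)"
    using D unfolding gderiv_def by simp
  then show ?thesis
    unfolding grad_def by (rule someI)
qed

lemma gderiv_unique:
  assumes "GDERIV h x :> D1" "GDERIV h x :> D2"
  shows "D1 = D2"
proof -
  have "(\<lambda>v. inner v D1) = (\<lambda>v. inner v D2)"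
    using assms unfolding gderiv_def by (rule has_derivative_unique)
  then have "inner (D1 - D2) D1 = inner (D1 - D2) D2"
    by metis
  then have "inner (D1 - D2) (D1 - D2) = 0"
    by (simp add: inner_diff_right)
  then show ?thesis by simp
qed

lemma grad_eqI: "GDERIV h x :> D \<Longrightarrow> grad h x = D"
  unfolding grad_def by (rule some_equality) (auto intro: gderiv_unique)

lemma grad_avg_eq:
  assumes "\<forall>k\<in>{1..N}. \<forall>x. f k differentiable (at x)"
  shows "grad_avg N f x = (1 / real N) *\<^sub>R (\<Sum>k=1..N. grad (f k) x)"
  unfolding grad_avg_def
proof (rule grad_eqI)
  have "\<And>k. k \<in> {1..N} \<Longrightarrow> (f k has_derivative (\<lambda>v. inner v (grad (f k) x))) (at x)"
    using gderiv_grad assms unfolding gderiv_def by blast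
  then have "((\<lambda>y. (1 / real N) * (\<Sum>k=1..N. f k y))
      has_derivative (\<lambda>v. (1 / real N) * (\<Sum>k=1..N. inner v (grad (f k) x)))) (at x)"
    by (intro has_derivative_mult_right has_derivative_sum)
  then show "GDERIV (\<lambda>y. 1 / real N * (\<Sum>k = 1..N. f k y)) x :> (1 / real N) *\<^sub>R (\<Sum>k=1..N. grad (f k) x)"
    unfolding gderiv_def by (simp add: inner_sum_right)
qed

lemma difference_quotient_LIMSEQ_grad:
  fixes h :: "'a::euclidean_space \<Rightarrow> real"
  assumes "h differentiable (at x)"
  shows "(\<lambda>i. (h (x + (1 / Suc i) *\<^sub>R b) - h x) / (1 / Suc i)) \<longlonglongrightarrow> inner b (grad h x)"
proof -
  have "(h has_derivative (\<lambda>v. inner v (grad h x))) (at (x + 0 *\<^sub>R b))"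
    using gderiv_grad[OF assms] unfolding gderiv_def by simp
  then have "((\<lambda>t. h (x + t *\<^sub>R b)) has_derivative (\<lambda>t. inner (t *\<^sub>R b) (grad h x))) (at 0)"
    by (rule has_derivative_compose[rotated]) (auto intro!: derivative_eq_intros)
  then have "((\<lambda>t. h (x + t *\<^sub>R b)) has_real_derivative (inner b (grad h x))) (at 0)"
    unfolding has_field_derivative_def by (simp add: mult.commute[of _ "b \<bullet> grad h x"])
  then have "(\<lambda>t. (h (x + t *\<^sub>R b) - h x) / t) \<midarrow>0\<rightarrow> inner b (grad h x)"
    unfolding DERIV_def by simp
  then have "(\<lambda>i. (h (x + S i *\<^sub>R b) - h x) / S i) \<longlonglongrightarrow> inner b (grad h x)"
    if "\<forall>i. S i \<noteq> 0" "S \<longlonglongrightarrow> 0" for S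
    using that unfolding LIMSEQ_SEQ_conv[symmetric] by blast
  from this[of "\<lambda>i. 1 / real (Suc i)"] show ?thesis
    using LIMSEQ_Suc[OF lim_inverse_n'] by simp
qed

lemma borel_measurable_grad:
  fixes h :: "'a::euclidean_space \<Rightarrow> real"
  assumes diff: "\<forall>x. h differentiable (at x)"
  shows "grad h \<in> borel_measurable borel"
proof -
  have cont: "continuous_on UNIV h"
    using diff differentiable_imp_continuous_within continuous_at_imp_continuous_on by blast
  have "(\<lambda>x. inner b (grad h x)) \<in> borel_measurable borel" for b
  proof (rule borel_measurable_LIMSEQ_real)
    show "(\<lambda>i. (h (x + (1 / Suc i) *\<^sub>R b) - h x) / (1 / Suc i)) \<longlonglongrightarrow> inner b (grad h x)" for x
      using difference_quotient_LIMSEQ_grad diff by blast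
    show "(\<lambda>x. (h (x + (1 / Suc i) *\<^sub>R b) - h x) / (1 / Suc i)) \<in> borel_measurable borel" for i
      by (intro borel_measurable_continuous_onI continuous_intros continuous_on_compose2[OF cont]) auto
  qed
  then have "(\<lambda>x. \<Sum>b\<in>Basis. inner (grad h x) b *\<^sub>R b) \<in> borel_measurable borel"
    by (simp add: inner_commute)
  then show ?thesis
    by (simp add: euclidean_representation)
qed

section \<open>Elementary inequalities\<close>

lemma norm_sum_power2_le:
  fixes v :: "'i \<Rightarrow> 'b::real_normed_vector"
  shows "(norm (\<Sum>i\<in>I. v i))\<^sup>2 \<le> real (card I) * (\<Sum>i\<in>I. (norm (v i))\<^sup>2)"
proof -
  have "(norm (\<Sum>i\<in>I. v i))\<^sup>2 \<le> (\<Sum>i\<in>I. norm (v i))\<^sup>2"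
    by (intro power_mono norm_sum) simp
  also have "\<dots> \<le> real (card I) * (\<Sum>i\<in>I. (norm (v i))\<^sup>2)"
    using sum_squared_le_sum_of_squares[of "\<lambda>i. norm (v i)" I] by (simp add: mult.commute)
  finally show ?thesis .
qed

lemma norm_add_power2_le:
  fixes a b :: "'b::real_normed_vector"
  shows "(norm (a + b))\<^sup>2 \<le> 2 * ((norm a)\<^sup>2 + (norm b)\<^sup>2)"
  using norm_sum_power2_le[of "\<lambda>i. if i then a else b" UNIV] by (simp add: UNIV_bool add.commute)

lemma norm_add3_power2_le:
  fixes a b c :: "'b::real_normed_vector"
  shows "(norm (a + b + c))\<^sup>2 \<le> 3 * ((norm a)\<^sup>2 + (norm b)\<^sup>2 + (norm c)\<^sup>2)"
  using norm_sum_power2_le[of "\<lambda>i. if i = 0 then a else if i = 1 then b else c" "{0, 1, 2 :: nat}"]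
  by (simp add: add.assoc)

lemma norm_diff_scaleR_power2:
  fixes u v :: "'v::real_inner"
  shows "(norm (u - t *\<^sub>R v))\<^sup>2 = (norm u)\<^sup>2 - 2 * t * inner u v + t\<^sup>2 * (norm v)\<^sup>2"
  unfolding power2_norm_eq_inner
  by (simp add: inner_diff_left inner_diff_right inner_commute algebra_simps power2_eq_square)

lemma sum_norm_power2_centered_le:
  fixes v :: "'i \<Rightarrow> 'v::real_inner"
  shows "(\<Sum>j\<in>I. (norm (v j - (1 / real (card I)) *\<^sub>R (\<Sum>k\<in>I. v k)))\<^sup>2) \<le> (\<Sum>j\<in>I. (norm (v j))\<^sup>2)"
proof (cases "finite I \<and> I \<noteq> {}")
  case True
  define m where "m = (1 / real (card I)) *\<^sub>R (\<Sum>k\<in>I. v k)"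
  have sum_v: "(\<Sum>k\<in>I. v k) = real (card I) *\<^sub>R m"
    unfolding m_def using True by simp
  have "(\<Sum>j\<in>I. (norm (v j - m))\<^sup>2) = (\<Sum>j\<in>I. (norm (v j))\<^sup>2 - 2 * inner (v j) m + (norm m)\<^sup>2)"
    using norm_diff_scaleR_power2[of "v _" 1 m] by simp
  also have "\<dots> = (\<Sum>j\<in>I. (norm (v j))\<^sup>2) - 2 * inner (\<Sum>j\<in>I. v j) m + real (card I) * (norm m)\<^sup>2"
    by (simp add: sum.distrib sum_subtractf inner_sum_left sum_distrib_left)
  also have "\<dots> = (\<Sum>j\<in>I. (norm (v j))\<^sup>2) - real (card I) * (norm m)\<^sup>2"
    unfolding sum_v by (simp add: power2_norm_eq_inner)
  finally show ?thesis
    unfolding m_def by simp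
qed auto

lemma saga_direction_power2_le:
  fixes a b c m :: "'v::real_normed_vector"
  assumes "0 \<le> lam" "lam \<le> 1"
  shows "(norm (a - lam *\<^sub>R (b - m)))\<^sup>2 \<le> 3 * ((norm (a - c))\<^sup>2 + (norm c)\<^sup>2 + (norm (b - c - m))\<^sup>2)"
proof -
  have scaled: "(norm (t *\<^sub>R v))\<^sup>2 = t\<^sup>2 * (norm v)\<^sup>2" for t and v :: 'v
    by (simp add: power_mult_distrib)
  have "a - lam *\<^sub>R (b - m) = (a - c) + (1 - lam) *\<^sub>R c + (- lam) *\<^sub>R (b - c - m)"
    by (simp add: algebra_simps)
  then have "(norm (a - lam *\<^sub>R (b - m)))\<^sup>2
      \<le> 3 * ((norm (a - c))\<^sup>2 + (1 - lam)\<^sup>2 * (norm c)\<^sup>2 + lam\<^sup>2 * (norm (b - c - m))\<^sup>2)"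
    using norm_add3_power2_le[of "a - c" "(1 - lam) *\<^sub>R c" "(- lam) *\<^sub>R (b - c - m)"]
    by (simp only: scaled power2_minus)
  also have "\<dots> \<le> 3 * ((norm (a - c))\<^sup>2 + (norm c)\<^sup>2 + (norm (b - c - m))\<^sup>2)"
    using assms by (intro mult_left_mono add_mono mult_left_le_one_le power_le_one) auto
  finally show ?thesis .
qed

lemma mean_saga_step_le:
  fixes a b c :: "nat \<Rightarrow> 'v::real_inner" and x xs :: 'v
  assumes N: "N \<ge> 1" and sum_c: "(\<Sum>j=1..N. c j) = 0" and "0 \<le> lam" "lam \<le> 1"
  shows "(1 / real N) * (\<Sum>j=1..N. (norm (x - g *\<^sub>R (a j - lam *\<^sub>R (b j - (1 / real N) *\<^sub>R (\<Sum>k=1..N. b k))) - xs))\<^sup>2)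
     \<le> (norm (x - xs))\<^sup>2 - 2 * g * inner (x - xs) ((1 / real N) *\<^sub>R (\<Sum>j=1..N. a j))
       + 3 * g\<^sup>2 * ((1 / real N) * (\<Sum>j=1..N. (norm (a j - c j))\<^sup>2) + (1 / real N) * (\<Sum>j=1..N. (norm (c j))\<^sup>2)
                     + (1 / real N) * (\<Sum>j=1..N. (norm (b j - c j))\<^sup>2))"
proof -
  define m where "m = (1 / real N) *\<^sub>R (\<Sum>k=1..N. b k)"
  define G where "G j = a j - lam *\<^sub>R (b j - m)" for j
  have m_centered: "m = (1 / real N) *\<^sub>R (\<Sum>k=1..N. b k - c k)"
    unfolding m_def using sum_c by (simp add: sum_subtractf)
  have "(\<Sum>j=1..N. b j - m) = 0"
    using N unfolding m_def by (simp add: sum_subtractf sum_constant_scaleR)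
  then have sum_G: "(\<Sum>j=1..N. G j) = (\<Sum>j=1..N. a j)"
    unfolding G_def by (simp add: sum_subtractf flip: scaleR_sum_right)
  have "(\<Sum>j=1..N. (norm (G j))\<^sup>2)
      \<le> (\<Sum>j=1..N. 3 * ((norm (a j - c j))\<^sup>2 + (norm (c j))\<^sup>2 + (norm (b j - c j - m))\<^sup>2))"
    unfolding G_def by (intro sum_mono saga_direction_power2_le[OF assms(3,4)])
  also have "\<dots> = 3 * ((\<Sum>j=1..N. (norm (a j - c j))\<^sup>2) + (\<Sum>j=1..N. (norm (c j))\<^sup>2)
      + (\<Sum>j=1..N. (norm (b j - c j - m))\<^sup>2))"
    by (simp add: sum.distrib sum_distrib_left)
  also have "\<dots> \<le> 3 * ((\<Sum>j=1..N. (norm (a j - c j))\<^sup>2) + (\<Sum>j=1..N. (norm (c j))\<^sup>2)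
      + (\<Sum>j=1..N. (norm (b j - c j))\<^sup>2))"
    unfolding m_centered using sum_norm_power2_centered_le[of "\<lambda>j. b j - c j" "{1..N}"] by simp
  finally have sum_G_sq: "g\<^sup>2 * (\<Sum>j=1..N. (norm (G j))\<^sup>2)
      \<le> g\<^sup>2 * (3 * ((\<Sum>j=1..N. (norm (a j - c j))\<^sup>2) + (\<Sum>j=1..N. (norm (c j))\<^sup>2)
      + (\<Sum>j=1..N. (norm (b j - c j))\<^sup>2)))"
    by (rule mult_left_mono) simp
  have "(norm (x - g *\<^sub>R G j - xs))\<^sup>2 = (norm (x - xs))\<^sup>2 - 2 * g * inner (x - xs) (G j) + g\<^sup>2 * (norm (G j))\<^sup>2" for j
    using norm_diff_scaleR_power2[of "x - xs" g "G j"] by (simp add: algebra_simps)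
  then have "(\<Sum>j=1..N. (norm (x - g *\<^sub>R G j - xs))\<^sup>2)
      = real N * (norm (x - xs))\<^sup>2 - 2 * g * inner (x - xs) (\<Sum>j=1..N. a j) + g\<^sup>2 * (\<Sum>j=1..N. (norm (G j))\<^sup>2)"
    unfolding sum_G[symmetric] by (simp add: sum.distrib sum_subtractf sum_distrib_left inner_sum_right)
  then have "(1 / real N) * (\<Sum>j=1..N. (norm (x - g *\<^sub>R G j - xs))\<^sup>2)
      = (norm (x - xs))\<^sup>2 - 2 * g * inner (x - xs) ((1 / real N) *\<^sub>R (\<Sum>j=1..N. a j))
        + (1 / real N) * (g\<^sup>2 * (\<Sum>j=1..N. (norm (G j))\<^sup>2))"
    using N by (simp add: field_simps)
  also have "\<dots> \<le> (norm (x - xs))\<^sup>2 - 2 * g * inner (x - xs) ((1 / real N) *\<^sub>R (\<Sum>j=1..N. a j))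
        + (1 / real N) * (g\<^sup>2 * (3 * ((\<Sum>j=1..N. (norm (a j - c j))\<^sup>2) + (\<Sum>j=1..N. (norm (c j))\<^sup>2)
        + (\<Sum>j=1..N. (norm (b j - c j))\<^sup>2))))"
    by (intro add_left_mono mult_left_mono[OF sum_G_sq]) simp
  finally show ?thesis
    unfolding m_def[symmetric] G_def[symmetric] by (simp add: algebra_simps)
qed

lemma mean_replace_one:
  fixes d e :: "nat \<Rightarrow> real"
  assumes N: "N \<ge> 1"
  shows "(1 / real N) * (\<Sum>j=1..N. (1 / real N) * (\<Sum>k=1..N. (if k = j then e k else d k)))
       = (1 / real N) * ((1 / real N) * (\<Sum>k=1..N. e k)) + (1 - 1 / real N) * ((1 / real N) * (\<Sum>k=1..N. d k))"
proof -
  have "(\<Sum>k=1..N. (if k = j then e k else d k)) = (\<Sum>k=1..N. d k) + (e j - d j)" if "j \<in> {1..N}" for j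
  proof -
    have "(\<Sum>k=1..N. (if k = j then e k else d k)) = (\<Sum>k=1..N. d k + (if k = j then e k - d k else 0))"
      by (intro sum.cong) auto
    then show ?thesis
      using that by (simp add: sum.distrib)
  qed
  then have "(\<Sum>j=1..N. (\<Sum>k=1..N. (if k = j then e k else d k)))
      = real N * (\<Sum>k=1..N. d k) + (\<Sum>k=1..N. e k) - (\<Sum>k=1..N. d k)"
    by (simp add: sum.distrib sum_subtractf)
  moreover have "(\<Sum>j=1..N. (1 / real N) * (\<Sum>k=1..N. (if k = j then e k else d k)))
      = (1 / real N) * (\<Sum>j=1..N. (\<Sum>k=1..N. (if k = j then e k else d k)))"
    by (simp add: sum_distrib_left)
  ultimately show ?thesis
    using N by (simp add: field_simps)
qed

lemma lyapunov_step_le: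
  fixes V I tau th A g g' L n :: real
  assumes "n \<ge> 1" "0 \<le> A" "tau \<le> L * V" "0 < g" "g \<le> g'" "0 < L"
  shows "V - 2 * g * I + 3 * g\<^sup>2 * (tau + th + A) + 3 * n * g\<^sup>2 * ((1 / n) * tau + (1 - 1 / n) * A)
     \<le> (1 + 6 * L * g\<^sup>2) * (V + 3 * n * g'\<^sup>2 * A) - 2 * g * I + 3 * g\<^sup>2 * th"
proof -
  have "g\<^sup>2 * tau \<le> g\<^sup>2 * (L * V)"
    using assms by (intro mult_left_mono) auto
  moreover have "n * g\<^sup>2 * A \<le> n * g'\<^sup>2 * A"
    using assms by (intro mult_right_mono mult_left_mono power_mono) auto
  moreover have "0 \<le> L * g\<^sup>2 * (n * g'\<^sup>2 * A)"
    using assms by simp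
  moreover have "V - 2 * g * I + 3 * g\<^sup>2 * (tau + th + A) + 3 * n * g\<^sup>2 * ((1 / n) * tau + (1 - 1 / n) * A)
      = V - 2 * g * I + 6 * (g\<^sup>2 * tau) + 3 * g\<^sup>2 * th + 3 * (n * g\<^sup>2 * A)"
    using assms by (simp add: field_simps)
  moreover have "(1 + 6 * L * g\<^sup>2) * (V + 3 * n * g'\<^sup>2 * A) - 2 * g * I + 3 * g\<^sup>2 * th
      = V + 6 * (g\<^sup>2 * (L * V)) + 3 * (n * g'\<^sup>2 * A) + 18 * (L * g\<^sup>2 * (n * g'\<^sup>2 * A)) - 2 * g * I + 3 * g\<^sup>2 * th"
    by (simp add: algebra_simps)
  ultimately show ?thesis
    by linarith
qed

section \<open>Square-integrable random vectors\<close>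

definition square_integrable :: "'w measure \<Rightarrow> ('w \<Rightarrow> 'b::euclidean_space) \<Rightarrow> bool" where
  "square_integrable M Y \<longleftrightarrow> Y \<in> borel_measurable M \<and> integrable M (\<lambda>w. (norm (Y w))\<^sup>2)"

lemma square_integrable_dominated:
  assumes "Y \<in> borel_measurable M" "integrable M g"
    and "\<And>w. w \<in> space M \<Longrightarrow> (norm (Y w))\<^sup>2 \<le> g w"
  shows "square_integrable M Y"
  unfolding square_integrable_def
proof
  show "integrable M (\<lambda>w. (norm (Y w))\<^sup>2)"
  proof (rule Bochner_Integration.integrable_bound[OF assms(2) _ AE_I2])
    show "norm ((norm (Y w))\<^sup>2) \<le> norm (g w)" if "w \<in> space M" for w
      using assms(3)[OF that] by simp
  qed (use assms(1) in simp)
qed (fact assms(1))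

lemma square_integrable_const: "finite_measure M \<Longrightarrow> square_integrable M (\<lambda>w. c)"
  unfolding square_integrable_def by (auto intro: finite_measure.integrable_const)

lemma square_integrable_add:
  assumes "square_integrable M Y" "square_integrable M Z"
  shows "square_integrable M (\<lambda>w. Y w + Z w)"
proof (rule square_integrable_dominated)
  show "(\<lambda>w. Y w + Z w) \<in> borel_measurable M"
    using assms by (auto simp: square_integrable_def)
  show "integrable M (\<lambda>w. 2 * ((norm (Y w))\<^sup>2 + (norm (Z w))\<^sup>2))"
    using assms by (auto simp: square_integrable_def)
qed (rule norm_add_power2_le)

lemma square_integrable_scaleR:
  "square_integrable M Y \<Longrightarrow> square_integrable M (\<lambda>w. c *\<^sub>R Y w)"
  unfolding square_integrable_def by (auto simp: power_mult_distrib)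

lemma square_integrable_diff:
  assumes "square_integrable M Y" "square_integrable M Z"
  shows "square_integrable M (\<lambda>w. Y w - Z w)"
  using square_integrable_add[OF assms(1) square_integrable_scaleR[OF assms(2), of "-1"]] by simp

lemma square_integrable_sum:
  assumes "finite_measure M" "\<And>i. i \<in> I \<Longrightarrow> square_integrable M (Y i)"
  shows "square_integrable M (\<lambda>w. \<Sum>i\<in>I. Y i w)"
proof (cases "finite I")
  case True
  then show ?thesis
    using assms(2)
  proof induction
    case empty
    then show ?case using square_integrable_const[OF assms(1), of 0] by simp
  next
    case (insert i I)
    then show ?case by (simp add: square_integrable_add)
  qed
qed (simp add: square_integrable_const[OF assms(1)])

lemma square_integrable_If:
  assumes "square_integrable M Y" "square_integrable M Z" "Measurable.pred M P"
  shows "square_integrable M (\<lambda>w. if P w then Y w else Z w)"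
proof (rule square_integrable_dominated)
  show "(\<lambda>w. if P w then Y w else Z w) \<in> borel_measurable M"
    using assms by (auto simp: square_integrable_def)
  show "integrable M (\<lambda>w. (norm (Y w))\<^sup>2 + (norm (Z w))\<^sup>2)"
    using assms by (auto simp: square_integrable_def)
qed simp

lemma square_integrable_select:
  fixes u :: "'w \<Rightarrow> nat"
  assumes "finite I" "u \<in> measurable M (count_space I)" "\<And>j. j \<in> I \<Longrightarrow> square_integrable M (Y j)"
  shows "square_integrable M (\<lambda>w. Y (u w) w)"
proof (rule square_integrable_dominated)
  show "(\<lambda>w. Y (u w) w) \<in> borel_measurable M"
  proof (rule measurable_compose_countable'[OF _ assms(2)])
    show "Y j \<in> borel_measurable M" if "j \<in> I" for j
      using assms(3)[OF that] by (simp add: square_integrable_def)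
  qed (rule countable_finite[OF assms(1)])
  show "integrable M (\<lambda>w. \<Sum>j\<in>I. (norm (Y j w))\<^sup>2)"
    using assms(3) unfolding square_integrable_def by auto
  show "(norm (Y (u w) w))\<^sup>2 \<le> (\<Sum>j\<in>I. (norm (Y j w))\<^sup>2)" if "w \<in> space M" for w
    using assms(1) measurable_space[OF assms(2) that] by (intro member_le_sum) auto
qed

lemma square_integrable_compose:
  assumes "finite_measure M" "square_integrable M Y" "g \<in> borel_measurable borel"
    and "\<And>y. (norm (g y))\<^sup>2 \<le> a + b * (norm y)\<^sup>2"
  shows "square_integrable M (\<lambda>w. g (Y w))"
proof (rule square_integrable_dominated)
  show "(\<lambda>w. g (Y w)) \<in> borel_measurable M"
    using assms(2,3) by (auto simp: square_integrable_def)
  show "integrable M (\<lambda>w. a + b * (norm (Y w))\<^sup>2)"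
    using assms(1,2) by (auto simp: square_integrable_def intro: finite_measure.integrable_const)
qed (rule assms(4))

section \<open>Conditioning on an independent uniform index\<close>

lemma (in prob_space) sigma_finite_subalgebra_of_subalgebra:
  "subalgebra M F \<Longrightarrow> sigma_finite_subalgebra M F"
  by (intro finite_measure_subalgebra_is_sigma_finite) unfold_locales

lemma (in prob_space) indep_set_mono:
  assumes "indep_set A B" "A' \<subseteq> A" "B' \<subseteq> B"
  shows "indep_set A' B'"
  using assms unfolding indep_set_def
  by (rule_tac indep_sets_mono_sets) (auto split: bool.split)

lemma (in prob_space) integral_indicator_mult_indep:
  fixes u :: "'a \<Rightarrow> 'i" and Y :: "'a \<Rightarrow> real"
  assumes F: "subalgebra M F" and u: "u \<in> measurable M (count_space UNIV)"
    and indep: "indep_set (sigma_sets (space M) {u -` B \<inter> space M | B. B \<subseteq> UNIV}) (sets F)"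
    and Y: "Y \<in> borel_measurable F" "integrable M Y"
  shows "(\<integral>w. indicator {w\<in>space M. u w = j} w * Y w \<partial>M) = prob {w\<in>space M. u w = j} * (\<integral>w. Y w \<partial>M)"
proof -
  define Z where "Z = (indicator {w\<in>space M. u w = j} :: 'a \<Rightarrow> real)"
  have event: "{w\<in>space M. u w = j} \<in> events"
    using u by measurable
  have "indep_var borel Z borel Y"
    unfolding indep_var_eq
  proof (intro conjI)
    show "random_variable borel Z" "random_variable borel Y"
      using event Y(1) measurable_from_subalg[OF F] unfolding Z_def by auto
    have "{Z -` A \<inter> space M |A. A \<in> sets borel} \<subseteq> {u -` B \<inter> space M | B. B \<subseteq> UNIV}"
    proof clarify
      fix A :: "real set"
      have "Z -` A \<inter> space M = u -` {k. (if k = j then 1 else 0) \<in> A} \<inter> space M"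
        unfolding Z_def by (auto simp: indicator_def split: if_splits)
      then show "\<exists>B. Z -` A \<inter> space M = u -` B \<inter> space M \<and> B \<subseteq> UNIV"
        by blast
    qed
    then have "sigma_sets (space M) {Z -` A \<inter> space M |A. A \<in> sets borel}
        \<subseteq> sigma_sets (space M) {u -` B \<inter> space M | B. B \<subseteq> UNIV}"
      by (rule sigma_sets_mono')
    moreover have "sigma_sets (space F) {Y -` A \<inter> space F |A. A \<in> sets borel} \<subseteq> sets F"
      using measurable_sets[OF Y(1)] by (intro sets.sigma_sets_subset) auto
    ultimately show "indep_set (sigma_sets (space M) {Z -` A \<inter> space M |A. A \<in> sets borel})
        (sigma_sets (space M) {Y -` A \<inter> space M |A. A \<in> sets borel})"
      using indep_set_mono[OF indep] F by (simp add: subalgebra_def)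
  qed
  moreover have "integrable M Z"
    unfolding Z_def using event by (intro integrable_real_indicator) (auto simp: emeasure_eq_measure)
  ultimately have "(\<integral>w. Z w * Y w \<partial>M) = (\<integral>w. Z w \<partial>M) * (\<integral>w. Y w \<partial>M)"
    using Y(2) by (rule indep_var_lebesgue_integral)
  then show ?thesis
    unfolding Z_def using event by simp
qed

lemma (in prob_space) real_cond_exp_uniform_select:
  fixes u :: "'a \<Rightarrow> 'i" and h :: "'i \<Rightarrow> 'a \<Rightarrow> real"
  assumes F: "subalgebra M F" and J: "finite J"
    and u: "u \<in> measurable M (count_space UNIV)" "\<And>w. w \<in> space M \<Longrightarrow> u w \<in> J"
    and uniform: "\<And>j. j \<in> J \<Longrightarrow> prob {w \<in> space M. u w = j} = 1 / real (card J)"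
    and indep: "indep_set (sigma_sets (space M) {u -` B \<inter> space M | B. B \<subseteq> UNIV}) (sets F)"
    and hF: "\<And>j. j \<in> J \<Longrightarrow> h j \<in> borel_measurable F"
    and hI: "\<And>j. j \<in> J \<Longrightarrow> integrable M (h j)"
  shows "AE w in M. real_cond_exp M F (\<lambda>w. h (u w) w) w = (1 / real (card J)) * (\<Sum>j\<in>J. h j w)"
proof -
  interpret sigma_finite_subalgebra M F
    using F by (rule sigma_finite_subalgebra_of_subalgebra)
  have int_indicator: "integrable M (\<lambda>x. indicator S x * g x)" if "S \<in> events" "integrable M g" for S and g :: "'a \<Rightarrow> real"
    using integrable_mult_indicator[OF that] by simp
  define E where "E j = {w\<in>space M. u w = j}" for j
  have E[measurable]: "E j \<in> sets M" for j
    unfolding E_def using u(1) by measurable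
  have select: "h (u w) w = (\<Sum>j\<in>J. indicator (E j) w * h j w)" if "w \<in> space M" for w
    using J u(2)[OF that] by (simp add: E_def that indicator_def if_distrib sum.delta cong: if_cong)
  have int_select: "integrable M (\<lambda>w. h (u w) w)"
    using hI by (subst Bochner_Integration.integrable_cong[OF refl select])
      (auto intro!: Bochner_Integration.integrable_sum int_indicator)
  show ?thesis
  proof (rule real_cond_exp_charact[OF _ int_select])
    fix A assume A: "A \<in> sets F"
    then have A_M: "A \<in> sets M"
      using F by (auto simp: subalgebra_def)
    have "(\<integral>x\<in>A. h (u x) x \<partial>M) = (\<Sum>j\<in>J. (\<integral>x. indicator (E j) x * (indicator A x * h j x) \<partial>M))"
      unfolding set_lebesgue_integral_def
      by (subst Bochner_Integration.integral_cong[OF refl, where g = "\<lambda>x. \<Sum>j\<in>J. indicator (E j) x * (indicator A x * h j x)"])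
         (auto simp: select sum_distrib_left mult.left_commute hI A_M int_indicator
               intro!: Bochner_Integration.integral_sum)
    also have "\<dots> = (\<Sum>j\<in>J. (\<integral>x. indicator A x * h j x \<partial>M) / real (card J))"
      using integral_indicator_mult_indep[OF F u(1) indep] hF hI A A_M uniform
      by (intro sum.cong refl) (auto simp: E_def int_indicator intro!: borel_measurable_times)
    also have "\<dots> = (\<integral>x\<in>A. (1 / real (card J)) * (\<Sum>j\<in>J. h j x) \<partial>M)"
      unfolding set_lebesgue_integral_def
      by (simp add: sum_distrib_left sum_divide_distrib A_M hI int_indicator
               flip: Bochner_Integration.integral_sum)
    finally show "(\<integral>x\<in>A. h (u x) x \<partial>M) = (\<integral>x\<in>A. (1 / real (card J)) * (\<Sum>j\<in>J. h j x) \<partial>M)" .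
  qed (use hF hI in auto)
qed

section \<open>The lambda-SAGA iteration\<close>

lemma Int_stable_vimage:
  assumes "\<And>B C. P B \<Longrightarrow> P C \<Longrightarrow> P (B \<inter> C)"
  shows "Int_stable {g -` B \<inter> \<Omega> | B. P B}"
proof (rule Int_stableI, clarify)
  fix B C assume "P B" "P C"
  then show "\<exists>D. g -` B \<inter> \<Omega> \<inter> (g -` C \<inter> \<Omega>) = g -` D \<inter> \<Omega> \<and> P D"
    using assms by (intro exI[of _ "B \<inter> C"]) auto
qed

locale saga = prob_space M
  for M :: "'w measure" +
  fixes N :: nat and f :: "nat \<Rightarrow> 'a::euclidean_space \<Rightarrow> real"
    and lam :: real and gamma :: "nat \<Rightarrow> real" and X0 X1 :: "'w \<Rightarrow> 'a"
    and U :: "nat \<Rightarrow> 'w \<Rightarrow> nat" and xs :: 'a and L :: real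
  assumes N_ge_1: "N \<ge> 1"
    and differentiable_f: "\<forall>k\<in>{1..N}. \<forall>x. f k differentiable (at x)"
    and lam_nonneg: "0 \<le> lam" and lam_le_1: "lam \<le> 1"
    and gamma_pos: "\<forall>n\<ge>1. gamma n > 0"
    and gamma_decreasing: "\<forall>n\<ge>1. gamma (Suc n) \<le> gamma n"
    and X0_measurable: "X0 \<in> borel_measurable M" and X1_measurable: "X1 \<in> borel_measurable M"
    and X0_square_integrable: "integrable M (\<lambda>w. (norm (X0 w))\<^sup>2)"
    and X1_square_integrable: "integrable M (\<lambda>w. (norm (X1 w))\<^sup>2)"
    and U_measurable: "\<forall>n\<ge>2. U n \<in> measurable M (count_space UNIV)"
    and U_range: "\<forall>n\<ge>2. \<forall>w\<in>space M. U n w \<in> {1..N}"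
    and U_uniform: "\<forall>n\<ge>2. \<forall>j\<in>{1..N}. measure M {w \<in> space M. U n w = j} = 1 / real N"
    and indep_init_U: "indep_sets
           (\<lambda>i. if i = 0 then {(\<lambda>w. (X0 w, X1 w)) -` B \<inter> space M | B. B \<in> sets borel}
                 else {U i -` B \<inter> space M | B. B \<subseteq> (UNIV :: nat set)})
           ({0} \<union> {2..})"
    and grad_avg_xs: "grad_avg N f xs = 0"
    and L_pos: "L > 0"
    and tau2_le: "\<forall>x. tau2 N f xs x \<le> L * (norm (x - xs))\<^sup>2"
begin

abbreviation "X m \<equiv> saga_X N f lam gamma X0 X1 U m"
abbreviation "Phi m \<equiv> saga_phi N f lam gamma X0 X1 U m"
abbreviation "A m \<equiv> saga_A N f lam gamma X0 X1 U xs m"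
abbreviation "T m \<equiv> saga_T N f lam gamma X0 X1 U xs m"
abbreviation "F n \<equiv> saga_filtration M X0 X1 U n"

lemma X_Suc:
  assumes "1 \<le> m"
  shows "X (Suc m) w = X m w - gamma m *\<^sub>R (grad (f (U (Suc m) w)) (X m w)
          - lam *\<^sub>R (grad (f (U (Suc m) w)) (Phi m w (U (Suc m) w))
                    - (1 / real N) *\<^sub>R (\<Sum>k=1..N. grad (f k) (Phi m w k))))"
  using assms by (cases m) (simp_all add: saga_X_def saga_phi_def Let_def split: prod.splits)

lemma Phi_Suc:
  assumes "1 \<le> m"
  shows "Phi (Suc m) w = (Phi m w)(U (Suc m) w := X m w)"
  using assms by (cases m) (simp_all add: saga_X_def saga_phi_def Let_def split: prod.splits)

definition generators :: "nat \<Rightarrow> 'w set set" where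
  "generators n = {X0 -` B \<inter> space M | B. B \<in> sets borel} \<union> {X1 -` B \<inter> space M | B. B \<in> sets borel}
      \<union> {U k -` {j} \<inter> space M | k j. 2 \<le> k \<and> k \<le> n}"

lemma generators_subset_events: "generators n \<subseteq> events"
  unfolding generators_def using X0_measurable X1_measurable U_measurable
  by (auto intro: measurable_sets measurable_sets[of _ M "count_space UNIV"])

lemma generators_subset_Pow: "generators n \<subseteq> Pow (space M)"
  unfolding generators_def by auto

lemma space_F: "space (F n) = space M"
  unfolding saga_filtration_def generators_def[symmetric] using generators_subset_Pow by simp

lemma sets_F: "sets (F n) = sigma_sets (space M) (generators n)"
  unfolding saga_filtration_def generators_def[symmetric] using generators_subset_Pow by (rule sets_measure_of)

lemma subalgebra_F: "subalgebra M (F n)"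
  unfolding subalgebra_def space_F sets_F
  using generators_subset_events by (simp add: sets.sigma_sets_subset)

lemma measurable_from_F: "g \<in> measurable (F n) K \<Longrightarrow> g \<in> measurable M K"
  using measurable_from_subalg[OF subalgebra_F] by blast

lemma generator_in_F: "S \<in> generators n \<Longrightarrow> S \<in> sets (F n)"
  unfolding sets_F by auto

lemma X0_measurable_F: "X0 \<in> borel_measurable (F n)"
proof (rule measurableI)
  fix B :: "'a set" assume "B \<in> sets borel"
  then have "X0 -` B \<inter> space M \<in> generators n"
    unfolding generators_def by blast
  then show "X0 -` B \<inter> space (F n) \<in> sets (F n)"
    by (simp add: space_F generator_in_F)
qed auto

lemma X1_measurable_F: "X1 \<in> borel_measurable (F n)"
proof (rule measurableI)
  fix B :: "'a set" assume "B \<in> sets borel"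
  then have "X1 -` B \<inter> space M \<in> generators n"
    unfolding generators_def by blast
  then show "X1 -` B \<inter> space (F n) \<in> sets (F n)"
    by (simp add: space_F generator_in_F)
qed auto

lemma U_measurable_F:
  assumes "2 \<le> k" "k \<le> n"
  shows "U k \<in> measurable (F n) (count_space {1..N})"
  unfolding measurable_count_space_eq2_countable
proof safe
  fix j
  have "U k -` {j} \<inter> space M \<in> generators n"
    unfolding generators_def using assms by blast
  then show "U k -` {j} \<inter> space (F n) \<in> sets (F n)"
    by (simp add: space_F generator_in_F)
qed (use assms U_range in \<open>auto simp: space_F\<close>)

lemma U_measurable_count_space: "2 \<le> k \<Longrightarrow> U k \<in> measurable M (count_space {1..N})"
  using U_measurable_F[of k k] measurable_from_F by blast

lemma borel_measurable_grad_f: "k \<in> {1..N} \<Longrightarrow> grad (f k) \<in> borel_measurable borel"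
  using differentiable_f borel_measurable_grad by blast

lemma measurable_state_F:
  "m \<le> n \<Longrightarrow> X m \<in> borel_measurable (F n) \<and> (\<forall>k. (\<lambda>w. Phi m w k) \<in> borel_measurable (F n))"
proof (induction m)
  case (Suc m)
  show ?case
  proof (cases "m = 0")
    case False
    then have m: "1 \<le> m" by simp
    from Suc have X_m: "X m \<in> borel_measurable (F n)" and Phi_m: "\<And>k. (\<lambda>w. Phi m w k) \<in> borel_measurable (F n)"
      by auto
    have U_next: "U (Suc m) \<in> measurable (F n) (count_space {1..N})"
      using m Suc by (intro U_measurable_F) auto
    have grad_Phi_m: "(\<lambda>w. grad (f j) (Phi m w k)) \<in> borel_measurable (F n)" if "j \<in> {1..N}" for j k
      by (rule measurable_compose[OF Phi_m borel_measurable_grad_f[OF that]])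
    have "(\<lambda>w. grad (f (U (Suc m) w)) (X m w)) \<in> borel_measurable (F n)"
      by (rule measurable_compose_countable'[OF _ U_next])
         (auto intro: measurable_compose[OF X_m borel_measurable_grad_f])
    moreover have "(\<lambda>w. grad (f (U (Suc m) w)) (Phi m w (U (Suc m) w))) \<in> borel_measurable (F n)"
      by (rule measurable_compose_countable'[OF _ U_next]) (auto intro: grad_Phi_m)
    moreover have "(\<lambda>w. \<Sum>k=1..N. grad (f k) (Phi m w k)) \<in> borel_measurable (F n)"
      using grad_Phi_m by (intro borel_measurable_sum) auto
    ultimately have "X (Suc m) \<in> borel_measurable (F n)"
      using X_m unfolding X_Suc[OF m, abs_def] by measurable
    moreover have "(\<lambda>w. Phi (Suc m) w k) \<in> borel_measurable (F n)" for k
      using X_m Phi_m U_next unfolding Phi_Suc[OF m, abs_def] fun_upd_apply by measurable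
    ultimately show ?thesis by blast
  qed (simp add: saga_X_def[abs_def] saga_phi_def[abs_def] X0_measurable_F X1_measurable_F)
qed (simp add: saga_X_def[abs_def] saga_phi_def[abs_def] X0_measurable_F)

lemma norm_grad_f_power2_le:
  assumes "k \<in> {1..N}"
  shows "(norm (grad (f k) y))\<^sup>2 \<le> 2 * (norm (grad (f k) xs))\<^sup>2 + 4 * N * L * (norm xs)\<^sup>2 + 4 * N * L * (norm y)\<^sup>2"
proof -
  have "(norm (grad (f k) y - grad (f k) xs))\<^sup>2 \<le> (\<Sum>j=1..N. (norm (grad (f j) y - grad (f j) xs))\<^sup>2)"
    using assms by (intro member_le_sum) auto
  also have "\<dots> = N * tau2 N f xs y"
    unfolding tau2_def using N_ge_1 by simp
  also have "\<dots> \<le> N * (L * (norm (y - xs))\<^sup>2)"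
    using tau2_le by (intro mult_left_mono) auto
  also have "\<dots> \<le> N * (L * (2 * ((norm y)\<^sup>2 + (norm xs)\<^sup>2)))"
    using norm_add_power2_le[of y "- xs"] L_pos by (intro mult_left_mono) auto
  finally have "(norm (grad (f k) y - grad (f k) xs))\<^sup>2 \<le> N * (L * (2 * ((norm y)\<^sup>2 + (norm xs)\<^sup>2)))" .
  moreover have "(norm (grad (f k) y))\<^sup>2 \<le> 2 * ((norm (grad (f k) y - grad (f k) xs))\<^sup>2 + (norm (grad (f k) xs))\<^sup>2)"
    using norm_add_power2_le[of "grad (f k) y - grad (f k) xs" "grad (f k) xs"] by simp
  ultimately show ?thesis
    by (simp add: algebra_simps)
qed

lemma square_integrable_grad_f:
  "square_integrable M Y \<Longrightarrow> k \<in> {1..N} \<Longrightarrow> square_integrable M (\<lambda>w. grad (f k) (Y w))"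
  by (rule square_integrable_compose[OF _ _ borel_measurable_grad_f norm_grad_f_power2_le])
     (auto intro: finite_measure_axioms)

lemma square_integrable_state: "square_integrable M (X m) \<and> (\<forall>k. square_integrable M (\<lambda>w. Phi m w k))"
proof (induction m)
  case (Suc m)
  show ?case
  proof (cases "m = 0")
    case False
    then have m: "1 \<le> m" by simp
    from Suc have X_m: "square_integrable M (X m)" and Phi_m: "\<And>k. square_integrable M (\<lambda>w. Phi m w k)"
      by auto
    have U_next: "U (Suc m) \<in> measurable M (count_space {1..N})"
      using m by (intro U_measurable_count_space) auto
    have "square_integrable M (\<lambda>w. grad (f (U (Suc m) w)) (X m w))"
      by (rule square_integrable_select[OF _ U_next]) (auto intro: square_integrable_grad_f X_m)
    moreover have "square_integrable M (\<lambda>w. grad (f (U (Suc m) w)) (Phi m w (U (Suc m) w)))"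
      by (rule square_integrable_select[OF _ U_next, where Y = "\<lambda>j w. grad (f j) (Phi m w j)"])
         (auto intro: square_integrable_grad_f Phi_m)
    moreover have "square_integrable M (\<lambda>w. \<Sum>k=1..N. grad (f k) (Phi m w k))"
      by (rule square_integrable_sum[OF finite_measure_axioms]) (auto intro: square_integrable_grad_f Phi_m)
    ultimately have "square_integrable M (X (Suc m))"
      unfolding X_Suc[OF m, abs_def] by (intro square_integrable_diff square_integrable_scaleR X_m)
    moreover have "square_integrable M (\<lambda>w. Phi (Suc m) w k)" for k
      unfolding Phi_Suc[OF m] fun_upd_apply using U_next
      by (intro square_integrable_If X_m Phi_m) measurable
    ultimately show ?thesis by blast
  qed (simp add: saga_X_def[abs_def] saga_phi_def[abs_def] square_integrable_def
      X0_measurable X1_measurable X0_square_integrable X1_square_integrable)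
qed (simp add: saga_X_def[abs_def] saga_phi_def[abs_def] square_integrable_def
    X0_measurable X0_square_integrable)

definition input_events :: "nat \<Rightarrow> 'w set set" where
  "input_events i = (if i = 0 then {(\<lambda>w. (X0 w, X1 w)) -` B \<inter> space M | B. B \<in> sets borel}
                     else {U i -` B \<inter> space M | B. B \<subseteq> UNIV})"

lemma Int_stable_input_events: "Int_stable (input_events i)"
proof -
  have "Int_stable {(\<lambda>w. (X0 w, X1 w)) -` B \<inter> space M | B. B \<in> sets borel}"
    by (rule Int_stable_vimage) (rule sets.Int)
  moreover have "Int_stable {U i -` B \<inter> space M | B. B \<subseteq> UNIV}"
    by (rule Int_stable_vimage) simp
  ultimately show ?thesis
    unfolding input_events_def by simp
qed

lemma generators_subset_input_events: "generators n \<subseteq> (\<Union>i\<in>{0} \<union> {2..n}. input_events i)"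
proof
  fix S assume "S \<in> generators n"
  then consider (X0) B where "B \<in> sets borel" "S = X0 -` B \<inter> space M"
    | (X1) B where "B \<in> sets borel" "S = X1 -` B \<inter> space M"
    | (U) k j where "2 \<le> k" "k \<le> n" "S = U k -` {j} \<inter> space M"
    unfolding generators_def by blast
  then show "S \<in> (\<Union>i\<in>{0} \<union> {2..n}. input_events i)"
  proof cases
    case X0
    then have "S = (\<lambda>w. (X0 w, X1 w)) -` (B \<times> UNIV) \<inter> space M" "B \<times> UNIV \<in> sets (borel :: ('a \<times> 'a) measure)"
      by (auto simp flip: borel_prod)
    then show ?thesis unfolding input_events_def by (intro UN_I[of 0]) auto
  next
    case X1
    then have "S = (\<lambda>w. (X0 w, X1 w)) -` (UNIV \<times> B) \<inter> space M" "UNIV \<times> B \<in> sets (borel :: ('a \<times> 'a) measure)"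
      by (auto simp flip: borel_prod)
    then show ?thesis unfolding input_events_def by (intro UN_I[of 0]) auto
  next
    case U
    then show ?thesis unfolding input_events_def by (intro UN_I[of k]) auto
  qed
qed

lemma indep_U_F:
  assumes "1 \<le> n"
  shows "indep_set (sigma_sets (space M) {U (Suc n) -` B \<inter> space M | B. B \<subseteq> UNIV}) (sets (F n))"
proof -
  define I where "I b = (if b then {Suc n} else {0} \<union> {2..n})" for b
  have "indep_sets input_events (\<Union>b. I b)"
    using indep_init_U unfolding input_events_def[abs_def]
    by (rule indep_sets_mono_index[rotated]) (use assms in \<open>auto simp: I_def\<close>)
  moreover have "disjoint_family_on I UNIV"
    using assms unfolding disjoint_family_on_def I_def by auto
  ultimately have "indep_sets (\<lambda>b. sigma_sets (space M) (\<Union>i\<in>I b. input_events i)) UNIV"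
    by (intro indep_sets_collect_sigma Int_stable_input_events) auto
  moreover have "(\<lambda>b. sigma_sets (space M) (\<Union>i\<in>I b. input_events i)) =
     case_bool (sigma_sets (space M) (input_events (Suc n))) (sigma_sets (space M) (\<Union>i\<in>{0} \<union> {2..n}. input_events i))"
    by (rule ext) (simp add: I_def split: bool.split)
  ultimately have "indep_set (sigma_sets (space M) (input_events (Suc n)))
      (sigma_sets (space M) (\<Union>i\<in>{0} \<union> {2..n}. input_events i))"
    unfolding indep_set_def by simp
  moreover have "sets (F n) \<subseteq> sigma_sets (space M) (\<Union>i\<in>{0} \<union> {2..n}. input_events i)"
    unfolding sets_F using generators_subset_input_events by (rule sigma_sets_mono')
  ultimately show ?thesis
    using indep_set_mono by (simp add: input_events_def)
qed

text \<open>Values of \<open>A\<close>, \<open>X\<close> and \<open>T\<close> at step \<open>n + 1\<close> on the event \<open>U (n + 1) = j\<close>.\<close>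

definition A_next :: "nat \<Rightarrow> nat \<Rightarrow> 'w \<Rightarrow> real" where
  "A_next n j w = (1 / real N) *
     (\<Sum>k=1..N. (norm (grad (f k) (if k = j then X n w else Phi n w k) - grad (f k) xs))\<^sup>2)"

definition X_next :: "nat \<Rightarrow> nat \<Rightarrow> 'w \<Rightarrow> 'a" where
  "X_next n j w = X n w - gamma n *\<^sub>R (grad (f j) (X n w)
     - lam *\<^sub>R (grad (f j) (Phi n w j) - (1 / real N) *\<^sub>R (\<Sum>k=1..N. grad (f k) (Phi n w k))))"

definition T_next :: "nat \<Rightarrow> nat \<Rightarrow> 'w \<Rightarrow> real" where
  "T_next n j w = (norm (X_next n j w - xs))\<^sup>2 + 3 * real N * (gamma n)\<^sup>2 * A_next n j w"

lemma A_Suc: "1 \<le> n \<Longrightarrow> A (Suc n) w = A_next n (U (Suc n) w) w"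
  unfolding saga_A_def A_next_def by (simp add: Phi_Suc fun_upd_apply)

lemma T_Suc: "1 \<le> n \<Longrightarrow> T (Suc n) w = T_next n (U (Suc n) w) w"
  unfolding saga_T_def T_next_def X_next_def by (simp add: A_Suc X_Suc)

lemma measurable_A_next: "A_next n j \<in> borel_measurable (F n)"
proof -
  have "(\<lambda>w. grad (f k) (if k = j then X n w else Phi n w k)) \<in> borel_measurable (F n)" if "k \<in> {1..N}" for k
    using measurable_state_F[of n n] borel_measurable_grad_f[OF that]
    by (cases "k = j") (auto intro: measurable_compose)
  then show ?thesis
    unfolding A_next_def[abs_def] by (intro borel_measurable_times borel_measurable_const borel_measurable_sum) auto
qed

lemma integrable_A_next: "integrable M (A_next n j)"
proof -
  have "square_integrable M (\<lambda>w. grad (f k) (if k = j then X n w else Phi n w k) - grad (f k) xs)"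
    if "k \<in> {1..N}" for k
    using square_integrable_state[of n] that
    by (cases "k = j") (auto intro!: square_integrable_diff square_integrable_grad_f
                             square_integrable_const finite_measure_axioms)
  then show ?thesis
    unfolding A_next_def[abs_def] square_integrable_def
    by (intro integrable_mult_right Bochner_Integration.integrable_sum) auto
qed

lemma measurable_T_next:
  assumes j: "j \<in> {1..N}"
  shows "T_next n j \<in> borel_measurable (F n)"
proof -
  have X_n: "X n \<in> borel_measurable (F n)" and Phi_n: "\<And>k. (\<lambda>w. Phi n w k) \<in> borel_measurable (F n)"
    using measurable_state_F[of n n] by auto
  have "(\<lambda>w. grad (f j) (X n w)) \<in> borel_measurable (F n)"
    by (rule measurable_compose[OF X_n borel_measurable_grad_f[OF j]])
  moreover have "(\<lambda>w. grad (f j) (Phi n w j)) \<in> borel_measurable (F n)"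
    by (rule measurable_compose[OF Phi_n borel_measurable_grad_f[OF j]])
  moreover have "(\<lambda>w. \<Sum>k=1..N. grad (f k) (Phi n w k)) \<in> borel_measurable (F n)"
    by (rule borel_measurable_sum) (rule measurable_compose[OF Phi_n borel_measurable_grad_f])
  ultimately show ?thesis
    using X_n measurable_A_next unfolding T_next_def[abs_def] X_next_def[abs_def] by measurable
qed

lemma integrable_T_next: "j \<in> {1..N} \<Longrightarrow> integrable M (T_next n j)"
proof -
  assume j: "j \<in> {1..N}"
  have X_n: "square_integrable M (X n)" and Phi_n: "\<And>k. square_integrable M (\<lambda>w. Phi n w k)"
    using square_integrable_state[of n] by auto
  have "square_integrable M (\<lambda>w. \<Sum>k=1..N. grad (f k) (Phi n w k))"
    by (rule square_integrable_sum[OF finite_measure_axioms]) (auto intro: square_integrable_grad_f Phi_n)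
  then have "square_integrable M (\<lambda>w. X_next n j w - xs)"
    unfolding X_next_def
    by (intro square_integrable_diff square_integrable_scaleR square_integrable_grad_f[OF _ j]
        X_n Phi_n square_integrable_const[OF finite_measure_axioms])
  then show ?thesis
    unfolding T_next_def[abs_def] square_integrable_def
    using integrable_A_next by (intro Bochner_Integration.integrable_add integrable_mult_right) auto
qed

lemma real_cond_exp_select_U_Suc:
  assumes "1 \<le> n" and "\<And>j. j \<in> {1..N} \<Longrightarrow> h j \<in> borel_measurable (F n)"
    and "\<And>j. j \<in> {1..N} \<Longrightarrow> integrable M (h j)"
  shows "AE w in M. real_cond_exp M (F n) (\<lambda>w. h (U (Suc n) w) w) w = (1 / real N) * (\<Sum>j=1..N. h j w)"
proof -
  have "AE w in M. real_cond_exp M (F n) (\<lambda>w. h (U (Suc n) w) w) w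
      = (1 / real (card {1..N})) * (\<Sum>j\<in>{1..N}. h j w)"
    by (rule real_cond_exp_uniform_select[OF subalgebra_F _ _ _ _ indep_U_F])
       (use assms U_measurable U_range U_uniform in auto)
  then show ?thesis
    by simp
qed

lemma sum_grad_f_xs: "(\<Sum>j=1..N. grad (f j) xs) = 0"
  using grad_avg_xs grad_avg_eq[OF differentiable_f] N_ge_1 by simp

lemma mean_A_next: "(1 / real N) * (\<Sum>j=1..N. A_next n j w) = (1 / real N) * tau2 N f xs (X n w) + (1 - 1 / real N) * A n w"
proof -
  have "A_next n j w = (1 / real N) * (\<Sum>k=1..N. (if k = j then (norm (grad (f k) (X n w) - grad (f k) xs))\<^sup>2
      else (norm (grad (f k) (Phi n w k) - grad (f k) xs))\<^sup>2))" for j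
    unfolding A_next_def by (intro arg_cong2[where f = "(*)"] sum.cong) auto
  then show ?thesis
    unfolding tau2_def saga_A_def using mean_replace_one[OF N_ge_1] by simp
qed

lemma mean_dist_next_le:
  "(1 / real N) * (\<Sum>j=1..N. (norm (X_next n j w - xs))\<^sup>2)
     \<le> (norm (X n w - xs))\<^sup>2 - 2 * gamma n * inner (X n w - xs) (grad_avg N f (X n w))
       + 3 * (gamma n)\<^sup>2 * (tau2 N f xs (X n w) + theta_star N f xs + A n w)"
  unfolding X_next_def tau2_def theta_star_def saga_A_def grad_avg_eq[OF differentiable_f]
  by (rule mean_saga_step_le[OF N_ge_1 sum_grad_f_xs lam_nonneg lam_le_1])

lemma mean_T_next_le:
  assumes "2 \<le> n"
  shows "(1 / real N) * (\<Sum>j=1..N. T_next n j w)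
     \<le> (1 + 6 * L * (gamma n)\<^sup>2) * T n w - 2 * gamma n * inner (X n w - xs) (grad_avg N f (X n w))
       + 3 * (gamma n)\<^sup>2 * theta_star N f xs"
proof -
  have "(1 / real N) * (\<Sum>j=1..N. T_next n j w) = (1 / real N) * (\<Sum>j=1..N. (norm (X_next n j w - xs))\<^sup>2)
     + 3 * real N * (gamma n)\<^sup>2 * ((1 / real N) * (\<Sum>j=1..N. A_next n j w))"
    unfolding T_next_def by (simp add: sum.distrib sum_distrib_left algebra_simps)
  also have "\<dots> \<le> (norm (X n w - xs))\<^sup>2 - 2 * gamma n * inner (X n w - xs) (grad_avg N f (X n w))
       + 3 * (gamma n)\<^sup>2 * (tau2 N f xs (X n w) + theta_star N f xs + A n w)
     + 3 * real N * (gamma n)\<^sup>2 * ((1 / real N) * tau2 N f xs (X n w) + (1 - 1 / real N) * A n w)"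
    unfolding mean_A_next using mean_dist_next_le by (rule add_right_mono)
  also have "\<dots> \<le> (1 + 6 * L * (gamma n)\<^sup>2) * T n w - 2 * gamma n * inner (X n w - xs) (grad_avg N f (X n w))
       + 3 * (gamma n)\<^sup>2 * theta_star N f xs"
    unfolding saga_T_def
  proof (rule lyapunov_step_le)
    show "0 \<le> A n w"
      unfolding saga_A_def by (simp add: sum_nonneg)
    have "gamma (Suc (n - 1)) \<le> gamma (n - 1)"
      using gamma_decreasing[rule_format, of "n - 1"] assms by simp
    then show "gamma n \<le> gamma (n - 1)"
      using assms by (simp add: Suc_diff_1)
  qed (use N_ge_1 tau2_le gamma_pos assms L_pos in auto)
  finally show ?thesis .
qed

lemma real_cond_exp_A_Suc:
  assumes "2 \<le> n"
  shows "AE w in M. real_cond_exp M (F n) (A (Suc n)) w = (1 / real N) * tau2 N f xs (X n w) + (1 - 1 / real N) * A n w"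
proof -
  have "A (Suc n) = (\<lambda>w. A_next n (U (Suc n) w) w)"
    using assms by (intro ext A_Suc) simp
  then have "AE w in M. real_cond_exp M (F n) (A (Suc n)) w = (1 / real N) * (\<Sum>j=1..N. A_next n j w)"
    using real_cond_exp_select_U_Suc[of n "A_next n"] assms
    by (simp add: measurable_A_next integrable_A_next)
  then show ?thesis
    unfolding mean_A_next .
qed

lemma real_cond_exp_T_Suc_le:
  assumes "2 \<le> n"
  shows "AE w in M. real_cond_exp M (F n) (T (Suc n)) w
     \<le> (1 + 6 * L * (gamma n)\<^sup>2) * T n w - 2 * gamma n * inner (X n w - xs) (grad_avg N f (X n w))
       + 3 * (gamma n)\<^sup>2 * theta_star N f xs"
proof -
  have "T (Suc n) = (\<lambda>w. T_next n (U (Suc n) w) w)"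
    using assms by (intro ext T_Suc) simp
  then have "AE w in M. real_cond_exp M (F n) (T (Suc n)) w = (1 / real N) * (\<Sum>j=1..N. T_next n j w)"
    using real_cond_exp_select_U_Suc[of n "T_next n"] assms
    by (simp add: measurable_T_next integrable_T_next)
  then show ?thesis
    by eventually_elim (use mean_T_next_le[OF assms] in simp)
qed

end

theorem mainTheorem2:
  fixes M :: "'w measure" and N :: nat and f :: "nat \<Rightarrow> 'a::euclidean_space \<Rightarrow> real"
    and lam :: real and gamma :: "nat \<Rightarrow> real" and X0 X1 :: "'w \<Rightarrow> 'a"
    and U :: "nat \<Rightarrow> 'w \<Rightarrow> nat" and xs :: 'a and L :: real
  assumes "prob_space M"
    and "N \<ge> 1"
    and "\<forall>k\<in>{1..N}. \<forall>x. f k differentiable (at x)"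
    and "0 \<le> lam" and "lam \<le> 1"
    and "\<forall>n\<ge>1. gamma n > 0"
    and "\<forall>n\<ge>1. gamma (Suc n) \<le> gamma n"
    and "X0 \<in> borel_measurable M" and "X1 \<in> borel_measurable M"
    and "integrable M (\<lambda>w. (norm (X0 w))\<^sup>2)" and "integrable M (\<lambda>w. (norm (X1 w))\<^sup>2)"
    and "\<forall>n\<ge>2. U n \<in> measurable M (count_space UNIV)"
    and "\<forall>n\<ge>2. \<forall>w\<in>space M. U n w \<in> {1..N}"
    and "\<forall>n\<ge>2. \<forall>j\<in>{1..N}. measure M {w \<in> space M. U n w = j} = 1 / real N"
    and "prob_space.indep_sets M
           (\<lambda>i. if i = 0 then {(\<lambda>w. (X0 w, X1 w)) -` B \<inter> space M | B. B \<in> sets borel}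
                 else {U i -` B \<inter> space M | B. B \<subseteq> (UNIV :: nat set)})
           ({0} \<union> {2..})"
    and "grad_avg N f xs = 0"
    and "L > 0"
    and "\<forall>x. tau2 N f xs x \<le> L * (norm (x - xs))\<^sup>2"
  shows "\<forall>n\<ge>2.
     (AE w in M. real_cond_exp M (saga_filtration M X0 X1 U n)
                   (saga_A N f lam gamma X0 X1 U xs (Suc n)) w
          = (1 / real N) * tau2 N f xs (saga_X N f lam gamma X0 X1 U n w)
            + (1 - 1 / real N) * saga_A N f lam gamma X0 X1 U xs n w)
   \<and> (AE w in M. real_cond_exp M (saga_filtration M X0 X1 U n)
                   (saga_T N f lam gamma X0 X1 U xs (Suc n)) w
          \<le> (1 + 6 * L * (gamma n)\<^sup>2) * saga_T N f lam gamma X0 X1 U xs n w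
            - 2 * gamma n * inner (saga_X N f lam gamma X0 X1 U n w - xs)
                                  (grad_avg N f (saga_X N f lam gamma X0 X1 U n w))
            + 3 * (gamma n)\<^sup>2 * theta_star N f xs)"
proof -
  interpret saga M N f lam gamma X0 X1 U xs L
    unfolding saga_def saga_axioms_def using assms by auto
  show ?thesis
    using real_cond_exp_A_Suc real_cond_exp_T_Suc_le by blast
qed

end
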